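(* For every $l\in L$ and $x_0\in\{x,y\}$: $\partial^A_{x_0}(l)=\operatorname{ad}_{\partial^L_{x_0}(l)}(1\otimes1)$.
   Context: $A=\mathbb{R}\langle x,y\rangle$; $L\subset A$ the free Lie algebra on $x,y$. $\partial^A_{x_0}:A\to A\otimes A$ is given on monomials by $a_1\cdots a_n\mapsto\sum_{i:\,a_i=x_0}a_1\cdots a_{i-1}\otimes a_{i+1}\cdots a_n$; write $\partial^A_{x_0}(l)=\sum\partial^1\otimes\partial^2$, and $\partial^L_{x_0}(l)=\sum\partial^1\epsilon(\partial^2)\in A$ where $\epsilon:A\to\mathbb{R}$ is the constant-term algebra homomorphism. $A\otimes A$ is an $A$-bimodule via $a(b\otimes c)d=ab\otimes cd$. For $a\in A$, $\operatorname{ad}_a:A\otimes A\to A\otimes A$ is defined linearly in $a$ by $\operatorname{ad}_1=\mathrm{id}$ and $\operatorname{ad}_{za}(m)=z\,\operatorname{ad}_a(m)-\operatorname{ad}_a(m)\,z$ for $z\in\{x,y\}$ and monomials $a$. *)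

theory Defs
  imports Complex_Main "HOL-Library.Poly_Mapping"
begin

datatype gen = GX | GY

type_synonym word = "gen list"

text \<open>A = R<x,y>: finitely supported real coefficient functions on words (monomials).
  A \<otimes> A: finitely supported real coefficient functions on pairs of words,
  the pair (u,v) standing for the basis tensor u \<otimes> v.\<close>
type_synonym alg = "word \<Rightarrow>\<^sub>0 real"
type_synonym alg2 = "(word \<times> word) \<Rightarrow>\<^sub>0 real"

definition gen_el :: "gen \<Rightarrow> alg" where
  "gen_el z = Poly_Mapping.single [z] 1"

definition one_alg :: alg where
  "one_alg = Poly_Mapping.single [] 1"

definition smul :: "real \<Rightarrow> alg \<Rightarrow> alg" where
  "smul c p = Poly_Mapping.map (\<lambda>r. c * r) p"

definition smul2 :: "real \<Rightarrow> alg2 \<Rightarrow> alg2" where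
  "smul2 c p = Poly_Mapping.map (\<lambda>r. c * r) p"

definition amul :: "alg \<Rightarrow> alg \<Rightarrow> alg" where
  "amul p q = (\<Sum>u\<in>Poly_Mapping.keys p. \<Sum>v\<in>Poly_Mapping.keys q.
      Poly_Mapping.single (u @ v) (Poly_Mapping.lookup p u * Poly_Mapping.lookup q v))"

definition bracket :: "alg \<Rightarrow> alg \<Rightarrow> alg" where
  "bracket a b = amul a b - amul b a"

text \<open>The free Lie algebra L on x,y, realised as the Lie subalgebra of A generated by x and y.\<close>
inductive_set freeLie :: "alg set" where
  gen: "gen_el z \<in> freeLie"
| zero: "0 \<in> freeLie"
| add: "a \<in> freeLie \<Longrightarrow> b \<in> freeLie \<Longrightarrow> a + b \<in> freeLie"
| smul: "a \<in> freeLie \<Longrightarrow> smul c a \<in> freeLie"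
| brk: "a \<in> freeLie \<Longrightarrow> b \<in> freeLie \<Longrightarrow> bracket a b \<in> freeLie"

definition eps :: "alg \<Rightarrow> real" where
  "eps p = Poly_Mapping.lookup p []"

definition dA :: "gen \<Rightarrow> alg \<Rightarrow> alg2" where
  "dA z p = (\<Sum>w\<in>Poly_Mapping.keys p. \<Sum>i\<in>{i. i < length w \<and> w ! i = z}.
      Poly_Mapping.single (take i w, drop (Suc i) w) (Poly_Mapping.lookup p w))"

definition id_eps :: "alg2 \<Rightarrow> alg" where
  "id_eps T = (\<Sum>(u,v)\<in>Poly_Mapping.keys T.
      Poly_Mapping.single u (Poly_Mapping.lookup T (u,v) * eps (Poly_Mapping.single v 1)))"

definition dL :: "gen \<Rightarrow> alg \<Rightarrow> alg" where
  "dL z l = id_eps (dA z l)"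

definition bimod :: "alg \<Rightarrow> alg2 \<Rightarrow> alg \<Rightarrow> alg2" where
  "bimod a T d = (\<Sum>u\<in>Poly_Mapping.keys a. \<Sum>(b,c)\<in>Poly_Mapping.keys T. \<Sum>v\<in>Poly_Mapping.keys d.
      Poly_Mapping.single (u @ b, c @ v) (Poly_Mapping.lookup a u * Poly_Mapping.lookup T (b,c) * Poly_Mapping.lookup d v))"

fun ad_word :: "word \<Rightarrow> alg2 \<Rightarrow> alg2" where
  "ad_word [] m = m"
| "ad_word (z # w) m =
     bimod (gen_el z) (ad_word w m) one_alg - bimod one_alg (ad_word w m) (gen_el z)"

definition ad :: "alg \<Rightarrow> alg2 \<Rightarrow> alg2" where
  "ad a m = (\<Sum>w\<in>Poly_Mapping.keys a. smul2 (Poly_Mapping.lookup a w) (ad_word w m))"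

definition one_tensor :: alg2 where
  "one_tensor = Poly_Mapping.single ([], []) 1"

end

theory Submission
  imports Defs
begin

(*
  Both sides are linear in l, so by induction over the Lie closure it suffices to treat the
  generators and brackets [a,b] of Lie elements. Three facts handle a bracket:
  d^A is a derivation into the bimodule A (x) A, i.e. d^A(p q) = d^A(p) q + p d^A(q);
  ad is multiplicative, ad_(p q) = ad_p o ad_q, and ad_l(m) = l m - m l for l in L;
  eps vanishes on L, so applying id (x) eps to the derivation rule gives
  d^L[a,b] = a d^L(b) - b d^L(a). With the induction hypothesis d^A(b) = ad_(d^L b)(1 (x) 1),
  ad_(d^L[a,b])(1 (x) 1) = ad_a(d^A b) - ad_b(d^A a) = a d^A(b) - d^A(b) a - b d^A(a) + d^A(a) b,
  which is d^A[a,b].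
*)

instantiation poly_mapping :: (type, real_vector) real_vector
begin

definition scaleR_poly_mapping :: "real \<Rightarrow> ('a \<Rightarrow>\<^sub>0 'b) \<Rightarrow> 'a \<Rightarrow>\<^sub>0 'b" where
  "scaleR_poly_mapping c p = Poly_Mapping.map (scaleR c) p"

lemma lookup_scaleR_poly_mapping:
  "Poly_Mapping.lookup (scaleR c p) k = c *\<^sub>R Poly_Mapping.lookup p k"
  by (simp add: scaleR_poly_mapping_def map.rep_eq when_def)

instance
  by standard (simp_all add: poly_mapping_eq_iff fun_eq_iff lookup_scaleR_poly_mapping lookup_add
      scaleR_add_right scaleR_add_left)

end

declare lookup_scaleR_poly_mapping [simp]

lemma scaleR_single [simp]: "c *\<^sub>R Poly_Mapping.single k a = Poly_Mapping.single k (c *\<^sub>R a)"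
  by (rule poly_mapping_eqI) (simp add: lookup_single when_def)

lemma smul_eq_scaleR: "smul c p = c *\<^sub>R p" and smul2_eq_scaleR: "smul2 c q = c *\<^sub>R q"
  by (simp_all add: smul_def smul2_def scaleR_poly_mapping_def real_scaleR_def[abs_def])

lemma poly_mapping_sum_single:
  fixes p :: "'a \<Rightarrow>\<^sub>0 'b::comm_monoid_add"
  shows "p = (\<Sum>k\<in>Poly_Mapping.keys p. Poly_Mapping.single k (Poly_Mapping.lookup p k))"
  by (rule poly_mapping_eqI) (auto simp: lookup_sum lookup_single when_def in_keys_iff sum.delta)

lemma poly_mapping_induct [case_names zero basis scaleR add]:
  fixes p :: "'a \<Rightarrow>\<^sub>0 real"
  assumes "P 0" "\<And>k. P (Poly_Mapping.single k 1)" "\<And>c p. P p \<Longrightarrow> P (c *\<^sub>R p)"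
    "\<And>p q. P p \<Longrightarrow> P q \<Longrightarrow> P (p + q)"
  shows "P p"
proof -
  have single: "P (Poly_Mapping.single k c)" for k c
    using assms(3)[OF assms(2), of c k] by simp
  have "P (\<Sum>k\<in>S. Poly_Mapping.single k (Poly_Mapping.lookup p k))" if "finite S" for S
    using that by (induction S rule: finite_induct) (simp_all add: assms single)
  then show ?thesis
    by (subst poly_mapping_sum_single) simp
qed

definition lin_ext :: "('a \<Rightarrow> 'b::real_vector) \<Rightarrow> ('a \<Rightarrow>\<^sub>0 real) \<Rightarrow> 'b" where
  "lin_ext f p = (\<Sum>k\<in>Poly_Mapping.keys p. Poly_Mapping.lookup p k *\<^sub>R f k)"

lemma linear_lin_ext: "linear (lin_ext f)"
proof (rule linearI)
  show "lin_ext f (p + q) = lin_ext f p + lin_ext f q" for p q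
    unfolding lin_ext_def by (rule setsum_keys_plus_distrib) (simp_all add: scaleR_add_left)
next
  fix c and p :: "'a \<Rightarrow>\<^sub>0 real"
  have "lin_ext f (c *\<^sub>R p) = (\<Sum>k\<in>Poly_Mapping.keys p. (c * Poly_Mapping.lookup p k) *\<^sub>R f k)"
    unfolding lin_ext_def by (rule sum.mono_neutral_cong_left) (auto simp: in_keys_iff)
  then show "lin_ext f (c *\<^sub>R p) = c *\<^sub>R lin_ext f p"
    by (simp add: lin_ext_def scaleR_sum_right)
qed

lemma linear_lin_ext_in_values:
  assumes "\<And>k. linear (G k)"
  shows "linear (\<lambda>x. lin_ext (\<lambda>k. G k x) p)"
  by (rule linearI)
    (simp_all add: lin_ext_def linear_add[OF assms] linear_scale[OF assms]
      scaleR_add_right sum.distrib scaleR_sum_right scaleR_left_commute mult.commute)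

lemma lin_ext_single [simp]: "lin_ext f (Poly_Mapping.single k c) = c *\<^sub>R f k"
  by (cases "c = 0") (simp_all add: lin_ext_def)

definition bilin_ext ::
    "('a \<Rightarrow> 'b \<Rightarrow> 'c) \<Rightarrow> ('a \<Rightarrow>\<^sub>0 real) \<Rightarrow> ('b \<Rightarrow>\<^sub>0 real) \<Rightarrow> 'c \<Rightarrow>\<^sub>0 real" where
  "bilin_ext f p q = (\<Sum>u\<in>Poly_Mapping.keys p. \<Sum>v\<in>Poly_Mapping.keys q.
      Poly_Mapping.single (f u v) (Poly_Mapping.lookup p u * Poly_Mapping.lookup q v))"

lemma bilin_ext_eq_lin_ext:
  "bilin_ext f p q = lin_ext (\<lambda>u. lin_ext (\<lambda>v. Poly_Mapping.single (f u v) 1) q) p"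
  by (simp add: bilin_ext_def lin_ext_def scaleR_sum_right)

lemma linear_bilin_ext_left: "linear (\<lambda>p. bilin_ext f p q)"
  unfolding bilin_ext_eq_lin_ext by (rule linear_lin_ext)

lemma linear_bilin_ext_right: "linear (bilin_ext f p)"
  unfolding bilin_ext_eq_lin_ext by (rule linear_lin_ext_in_values) (rule linear_lin_ext)

lemmas bilin_ext_add_left [simp] = linear_add[OF linear_bilin_ext_left]
   and bilin_ext_diff_left [simp] = linear_diff[OF linear_bilin_ext_left]
   and bilin_ext_scaleR_left [simp] = linear_scale[OF linear_bilin_ext_left]
   and bilin_ext_zero_left [simp] = linear_0[OF linear_bilin_ext_left]
   and bilin_ext_add_right [simp] = linear_add[OF linear_bilin_ext_right]
   and bilin_ext_diff_right [simp] = linear_diff[OF linear_bilin_ext_right]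
   and bilin_ext_scaleR_right [simp] = linear_scale[OF linear_bilin_ext_right]
   and bilin_ext_zero_right [simp] = linear_0[OF linear_bilin_ext_right]

lemma bilin_ext_single [simp]:
  "bilin_ext f (Poly_Mapping.single u a) (Poly_Mapping.single v b) =
    Poly_Mapping.single (f u v) (a * b)"
  by (simp add: bilin_ext_eq_lin_ext)

lemma bilin_ext_assoc:
  assumes "\<And>u v w. f (g u v) w = h u (k v w)"
  shows "bilin_ext f (bilin_ext g p q) r = bilin_ext h p (bilin_ext k q r)"
proof (induction p rule: poly_mapping_induct)
  case (basis u)
  show ?case
  proof (induction q rule: poly_mapping_induct)
    case (basis v)
    show ?case
      by (induction r rule: poly_mapping_induct) (simp_all add: assms mult.assoc)
  qed simp_all
qed simp_all

lemma amul_eq_bilin_ext: "amul = bilin_ext (@)"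
  by (simp add: fun_eq_iff amul_def bilin_ext_def)

abbreviation lmul :: "alg \<Rightarrow> alg2 \<Rightarrow> alg2" where
  "lmul \<equiv> bilin_ext (\<lambda>u k. (u @ fst k, snd k))"

abbreviation rmul :: "alg2 \<Rightarrow> alg \<Rightarrow> alg2" where
  "rmul \<equiv> bilin_ext (\<lambda>k v. (fst k, snd k @ v))"

lemma bimod_one_right: "bimod a T one_alg = lmul a T"
  by (simp add: bimod_def bilin_ext_def one_alg_def split_def)

lemma bimod_one_left: "bimod one_alg T d = rmul T d"
  by (simp add: bimod_def bilin_ext_def one_alg_def split_def)

lemma lmul_lmul: "lmul a (lmul b T) = lmul (amul a b) T"
  unfolding amul_eq_bilin_ext by (rule bilin_ext_assoc[symmetric]) simp

lemma rmul_rmul: "rmul (rmul T c) d = rmul T (amul c d)"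
  unfolding amul_eq_bilin_ext by (rule bilin_ext_assoc) simp

lemma lmul_rmul: "lmul a (rmul T d) = rmul (lmul a T) d"
  by (rule bilin_ext_assoc[symmetric]) simp

lemma ad_word_Cons:
  "ad_word (z # w) m = lmul (gen_el z) (ad_word w m) - rmul (ad_word w m) (gen_el z)"
  by (simp add: bimod_one_right bimod_one_left)

declare ad_word.simps(2) [simp del]

lemma linear_ad_word: "linear (ad_word w)"
proof (induction w)
  case Nil
  show ?case by (simp add: linear_iff)
next
  case (Cons z w)
  show ?case
    by (rule linearI)
      (simp_all add: ad_word_Cons linear_add[OF Cons.IH] linear_scale[OF Cons.IH] scaleR_diff_right)
qed

lemmas ad_word_add [simp] = linear_add[OF linear_ad_word]
   and ad_word_scaleR [simp] = linear_scale[OF linear_ad_word]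
   and ad_word_zero [simp] = linear_0[OF linear_ad_word]

lemma ad_word_append: "ad_word (u @ v) m = ad_word u (ad_word v m)"
  by (induction u) (simp_all add: ad_word_Cons)

lemma ad_eq_lin_ext: "ad a m = lin_ext (\<lambda>w. ad_word w m) a"
  by (simp add: ad_def lin_ext_def smul2_eq_scaleR)

lemma linear_ad_left: "linear (\<lambda>a. ad a m)"
  by (simp add: ad_eq_lin_ext linear_lin_ext)

lemmas ad_add [simp] = linear_add[OF linear_ad_left]
   and ad_diff [simp] = linear_diff[OF linear_ad_left]
   and ad_scaleR [simp] = linear_scale[OF linear_ad_left]
   and ad_zero [simp] = linear_0[OF linear_ad_left]

lemma ad_single [simp]: "ad (Poly_Mapping.single w c) m = c *\<^sub>R ad_word w m"
  by (simp add: ad_eq_lin_ext)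

lemma ad_amul: "ad (amul p q) m = ad p (ad q m)"
proof (induction p rule: poly_mapping_induct)
  case (basis u)
  show ?case
    by (induction q rule: poly_mapping_induct)
      (simp_all add: amul_eq_bilin_ext ad_word_append scaleR_add_right)
qed (simp_all add: amul_eq_bilin_ext)

lemma ad_freeLie_eq_commutator: "l \<in> freeLie \<Longrightarrow> ad l m = lmul l m - rmul m l"
proof (induction arbitrary: m rule: freeLie.induct)
  case (gen z)
  then show ?case by (simp add: gen_el_def ad_word_Cons)
next
  case (brk a b)
  have "ad (bracket a b) m = ad a (ad b m) - ad b (ad a m)"
    by (simp add: bracket_def ad_amul)
  also have "\<dots> = lmul a (lmul b m - rmul m b) - rmul (lmul b m - rmul m b) a
      - (lmul b (lmul a m - rmul m a) - rmul (lmul a m - rmul m a) b)"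
    by (simp only: brk.IH)
  also have "\<dots> = lmul (bracket a b) m - rmul m (bracket a b)"
    by (simp add: bracket_def lmul_lmul rmul_rmul lmul_rmul algebra_simps)
  finally show ?case .
qed (simp_all add: smul_eq_scaleR scaleR_diff_right)

lemma linear_eps: "linear eps"
  by (rule linearI) (simp_all add: eps_def lookup_add)

lemmas eps_add [simp] = linear_add[OF linear_eps]
   and eps_diff [simp] = linear_diff[OF linear_eps]
   and eps_scaleR [simp] = linear_scale[OF linear_eps]
   and eps_zero [simp] = linear_0[OF linear_eps]

lemma eps_single [simp]: "eps (Poly_Mapping.single w c) = (if w = [] then c else 0)"
  by (simp add: eps_def lookup_single)

lemma eps_amul: "eps (amul p q) = eps p * eps q"
proof (induction p rule: poly_mapping_induct)
  case (basis u)
  show ?case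
    by (induction q rule: poly_mapping_induct) (simp_all add: amul_eq_bilin_ext algebra_simps)
qed (simp_all add: amul_eq_bilin_ext algebra_simps)

lemma eps_freeLie_eq_0: "l \<in> freeLie \<Longrightarrow> eps l = 0"
  by (induction rule: freeLie.induct) (simp_all add: gen_el_def smul_eq_scaleR bracket_def eps_amul)

definition dA_word :: "gen \<Rightarrow> word \<Rightarrow> alg2" where
  "dA_word z w =
    (\<Sum>i\<in>{i. i < length w \<and> w ! i = z}. Poly_Mapping.single (take i w, drop (Suc i) w) 1)"

lemma dA_eq_lin_ext: "dA z p = lin_ext (dA_word z) p"
  by (simp add: dA_def lin_ext_def dA_word_def scaleR_sum_right)

lemma linear_dA: "linear (dA z)"
  by (simp add: dA_eq_lin_ext[abs_def] linear_lin_ext)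

lemmas dA_add [simp] = linear_add[OF linear_dA]
   and dA_diff [simp] = linear_diff[OF linear_dA]
   and dA_scaleR [simp] = linear_scale[OF linear_dA]
   and dA_zero [simp] = linear_0[OF linear_dA]

lemma dA_single [simp]: "dA z (Poly_Mapping.single w c) = c *\<^sub>R dA_word z w"
  by (simp add: dA_eq_lin_ext)

lemma positions_append:
  "{i. i < length (u @ v) \<and> (u @ v) ! i = z} =
   {i. i < length u \<and> u ! i = z} \<union> (+) (length u) ` {j. j < length v \<and> v ! j = z}"
proof -
  have "i \<in> (+) (length u) ` {j. j < length v \<and> v ! j = z}"
    if "i < length u + length v" "\<not> i < length u" "v ! (i - length u) = z" for i
    using that by (intro image_eqI[where x="i - length u"]) auto
  then show ?thesis by (auto simp: nth_append)
qed

lemma dA_word_append: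
  "dA_word z (u @ v) =
    rmul (dA_word z u) (Poly_Mapping.single v 1) + lmul (Poly_Mapping.single u 1) (dA_word z v)"
proof -
  have "inj_on ((+) (length u)) A" for A by simp
  moreover have
    "{i. i < length u \<and> u ! i = z} \<inter> (+) (length u) ` {j. j < length v \<and> v ! j = z} = {}"
    by auto
  ultimately show ?thesis
    unfolding dA_word_def positions_append
    by (simp add: sum.union_disjoint sum.reindex
        linear_sum[OF linear_bilin_ext_left] linear_sum[OF linear_bilin_ext_right])
qed

lemma dA_amul: "dA z (amul p q) = rmul (dA z p) q + lmul p (dA z q)"
proof (induction p rule: poly_mapping_induct)
  case (basis u)
  show ?case
  proof (induction q rule: poly_mapping_induct)
    case (basis v)
    have "dA z (amul (Poly_Mapping.single u 1) (Poly_Mapping.single v 1)) = dA_word z (u @ v)"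
      by (simp add: amul_eq_bilin_ext)
    then show ?case
      by (simp add: dA_word_append)
  qed (simp_all add: amul_eq_bilin_ext scaleR_add_right)
qed (simp_all add: amul_eq_bilin_ext scaleR_add_right)

lemma id_eps_eq_lin_ext:
  "id_eps T = lin_ext (\<lambda>k. Poly_Mapping.single (fst k) (eps (Poly_Mapping.single (snd k) 1))) T"
  by (simp add: id_eps_def lin_ext_def split_def)

lemma linear_id_eps: "linear id_eps"
  by (simp add: id_eps_eq_lin_ext[abs_def] linear_lin_ext)

lemmas id_eps_add [simp] = linear_add[OF linear_id_eps]
   and id_eps_diff [simp] = linear_diff[OF linear_id_eps]
   and id_eps_scaleR [simp] = linear_scale[OF linear_id_eps]
   and id_eps_zero [simp] = linear_0[OF linear_id_eps]

lemma id_eps_single [simp]: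
  "id_eps (Poly_Mapping.single k c) = (if snd k = [] then Poly_Mapping.single (fst k) c else 0)"
  by (simp add: id_eps_eq_lin_ext)

lemma id_eps_lmul: "id_eps (lmul a T) = amul a (id_eps T)"
proof (induction a rule: poly_mapping_induct)
  case (basis u)
  show ?case
    by (induction T rule: poly_mapping_induct) (auto simp: amul_eq_bilin_ext)
qed (simp_all add: amul_eq_bilin_ext)

lemma id_eps_rmul: "id_eps (rmul T d) = eps d *\<^sub>R id_eps T"
proof (induction T rule: poly_mapping_induct)
  case (basis k)
  show ?case
    by (induction d rule: poly_mapping_induct) (auto simp: scaleR_add_left)
qed (simp_all add: scaleR_add_right)

lemma dL_bracket:
  assumes "eps a = 0" "eps b = 0"
  shows "dL z (bracket a b) = amul a (dL z b) - amul b (dL z a)"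
  by (simp add: dL_def bracket_def dA_amul id_eps_lmul id_eps_rmul assms)

theorem mainTheorem14:
  fixes l :: alg and x0 :: gen
  assumes "l \<in> freeLie"
  shows "dA x0 l = ad (dL x0 l) one_tensor"
  using assms
proof (induction rule: freeLie.induct)
  case (gen z)
  have "{i. i = 0 \<and> [z] ! i = x0} = (if z = x0 then {0} else {})"
    by auto
  then show ?case
    by (simp add: gen_el_def dL_def dA_word_def one_tensor_def)
next
  case (brk a b)
  have "dA x0 (bracket a b) =
      lmul a (dA x0 b) - rmul (dA x0 b) a - (lmul b (dA x0 a) - rmul (dA x0 a) b)"
    by (simp add: bracket_def dA_amul)
  also have "\<dots> = ad a (dA x0 b) - ad b (dA x0 a)"
    by (simp only: ad_freeLie_eq_commutator brk.hyps)
  also have "\<dots> = ad (dL x0 (bracket a b)) one_tensor"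
    by (simp add: dL_bracket eps_freeLie_eq_0 brk.hyps ad_amul flip: brk.IH)
  finally show ?case .
qed (simp_all add: dL_def smul_eq_scaleR)

end
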